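(* Let $\mathcal C$ be a small cancellative category (all morphisms are monomorphisms and epimorphisms). If $\mathcal C$ contains no nonidentity retractions, then for every morphism $\alpha$ of $\mathcal C$ the comma category $\mathfrak F\mathcal C/\alpha$ is a partially ordered set.
   Context: The factorization category $\mathfrak F\mathcal C$ has the morphisms of $\mathcal C$ as objects; for $\alpha:a\to b$ and $\beta:a'\to b'$, a morphism $\alpha\to\beta$ is a pair $(f,g)$ with $f:a'\to a$, $g:b\to b'$ and $g\circ\alpha\circ f=\beta$; composition of $(f_1,g_1):\alpha\to\beta$ and $(f_2,g_2):\beta\to\gamma$ is $(f_1\circ f_2,g_2\circ g_1)$. The comma category $\mathfrak F\mathcal C/\alpha$ has objects pairs $(\beta,\varphi)$ with $\varphi:\beta\to\alpha$ in $\mathfrak F\mathcal C$, and morphisms $\psi:\beta\to\beta'$ with $\varphi'\circ\psi=\varphi$. A retraction is a morphism $r$ for which there is $s$ with $r\circ s$ an identity. A small category is a partially ordered set if between any two objects there is at most one morphism and objects with morphisms in both directions coincide. *)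

theory Defs
  imports Main
begin

text \<open>A small category: a set of objects, a set of morphisms, domain, codomain,
  composition (Comp g f means g \<circ> f, defined when Cod f = Dom g) and identities.\<close>

record ('o, 'm) cat =
  Obj  :: "'o set"
  Arr  :: "'m set"
  Dom  :: "'m \<Rightarrow> 'o"
  Cod  :: "'m \<Rightarrow> 'o"
  Comp :: "'m \<Rightarrow> 'm \<Rightarrow> 'm"
  Id   :: "'o \<Rightarrow> 'm"

definition Hom :: "('o, 'm) cat \<Rightarrow> 'o \<Rightarrow> 'o \<Rightarrow> 'm set" where
  "Hom C a b = {f \<in> Arr C. Dom C f = a \<and> Cod C f = b}"

definition category :: "('o, 'm) cat \<Rightarrow> bool" where
  "category C \<longleftrightarrow>
     (\<forall>f \<in> Arr C. Dom C f \<in> Obj C \<and> Cod C f \<in> Obj C)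
   \<and> (\<forall>a \<in> Obj C. Id C a \<in> Hom C a a)
   \<and> (\<forall>f \<in> Arr C. \<forall>g \<in> Arr C. Cod C f = Dom C g \<longrightarrow>
        Comp C g f \<in> Hom C (Dom C f) (Cod C g))
   \<and> (\<forall>f \<in> Arr C. \<forall>g \<in> Arr C. \<forall>h \<in> Arr C. Cod C f = Dom C g \<and> Cod C g = Dom C h \<longrightarrow>
        Comp C h (Comp C g f) = Comp C (Comp C h g) f)
   \<and> (\<forall>f \<in> Arr C. Comp C (Id C (Cod C f)) f = f \<and> Comp C f (Id C (Dom C f)) = f)"

definition cancellative :: "('o, 'm) cat \<Rightarrow> bool" where
  "cancellative C \<longleftrightarrow>
     (\<forall>h \<in> Arr C. \<forall>f \<in> Arr C. \<forall>g \<in> Arr C.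
        Cod C f = Dom C h \<and> Cod C g = Dom C h \<and> Dom C f = Dom C g \<and>
        Comp C h f = Comp C h g \<longrightarrow> f = g)
   \<and> (\<forall>h \<in> Arr C. \<forall>f \<in> Arr C. \<forall>g \<in> Arr C.
        Dom C f = Cod C h \<and> Dom C g = Cod C h \<and> Cod C f = Cod C g \<and>
        Comp C f h = Comp C g h \<longrightarrow> f = g)"

definition retraction :: "('o, 'm) cat \<Rightarrow> 'm \<Rightarrow> bool" where
  "retraction C r \<longleftrightarrow> r \<in> Arr C \<and>
     (\<exists>s \<in> Arr C. Cod C s = Dom C r \<and> (\<exists>a \<in> Obj C. Comp C r s = Id C a))"

definition is_identity :: "('o, 'm) cat \<Rightarrow> 'm \<Rightarrow> bool" where
  "is_identity C f \<longleftrightarrow> (\<exists>a \<in> Obj C. f = Id C a)"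

definition FHom :: "('o, 'm) cat \<Rightarrow> 'm \<Rightarrow> 'm \<Rightarrow> ('m \<times> 'm) set" where
  "FHom C \<alpha> \<beta> = {(f, g). f \<in> Hom C (Dom C \<beta>) (Dom C \<alpha>) \<and> g \<in> Hom C (Cod C \<alpha>) (Cod C \<beta>)
                      \<and> Comp C g (Comp C \<alpha> f) = \<beta>}"

definition FComp :: "('o, 'm) cat \<Rightarrow> 'm \<times> 'm \<Rightarrow> 'm \<times> 'm \<Rightarrow> 'm \<times> 'm" where
  "FComp C p q = (Comp C (fst p) (fst q), Comp C (snd q) (snd p))"
  \<comment> \<open>p : \<alpha> \<rightarrow> \<beta> first, q : \<beta> \<rightarrow> \<gamma> second\<close>

definition CommaObj :: "('o, 'm) cat \<Rightarrow> 'm \<Rightarrow> ('m \<times> ('m \<times> 'm)) set" where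
  "CommaObj C \<alpha> = {(\<beta>, \<phi>). \<beta> \<in> Arr C \<and> \<phi> \<in> FHom C \<beta> \<alpha>}"

definition CommaHom :: "('o, 'm) cat \<Rightarrow> 'm \<times> ('m \<times> 'm) \<Rightarrow> 'm \<times> ('m \<times> 'm) \<Rightarrow> ('m \<times> 'm) set" where
  "CommaHom C X Y = {\<psi> \<in> FHom C (fst X) (fst Y). FComp C \<psi> (snd Y) = snd X}"

definition is_poset :: "'x set \<Rightarrow> ('x \<Rightarrow> 'x \<Rightarrow> 'h set) \<Rightarrow> bool" where
  "is_poset Ob H \<longleftrightarrow>
     (\<forall>X \<in> Ob. \<forall>Y \<in> Ob. \<forall>u \<in> H X Y. \<forall>v \<in> H X Y. u = v)
   \<and> (\<forall>X \<in> Ob. \<forall>Y \<in> Ob. H X Y \<noteq> {} \<and> H Y X \<noteq> {} \<longrightarrow> X = Y)"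

end

theory Submission
  imports Defs
begin

text \<open>A morphism \<open>(p, q) : (\<beta>, (f, g)) \<rightarrow> (\<beta>', (f', g'))\<close> of the comma category satisfies
  \<open>p \<circ> f' = f\<close> and \<open>g' \<circ> q = g\<close>. Since \<open>f'\<close> is epi and \<open>g'\<close> is mono, these equations
  determine \<open>p\<close> and \<open>q\<close>, so hom-sets have at most one element. Given morphisms in both
  directions, \<open>(p \<circ> p') \<circ> f = f\<close> and \<open>g' \<circ> (q \<circ> q') = g'\<close>, so cancellation makes
  \<open>p\<close> and \<open>q\<close> retractions, hence identities; then \<open>\<beta>' = q \<circ> \<beta> \<circ> p = \<beta>\<close>,
  \<open>f = f'\<close> and \<open>g = g'\<close>.\<close>

lemma category_Id:
  "category C \<Longrightarrow> a \<in> Obj C \<Longrightarrow> Id C a \<in> Arr C \<and> Dom C (Id C a) = a \<and> Cod C (Id C a) = a"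
  unfolding category_def Hom_def by auto

lemma category_Dom_in_Obj: "category C \<Longrightarrow> f \<in> Arr C \<Longrightarrow> Dom C f \<in> Obj C"
  unfolding category_def by auto

lemma category_Cod_in_Obj: "category C \<Longrightarrow> f \<in> Arr C \<Longrightarrow> Cod C f \<in> Obj C"
  unfolding category_def by auto

lemma category_comp:
  "category C \<Longrightarrow> f \<in> Arr C \<Longrightarrow> g \<in> Arr C \<Longrightarrow> Cod C f = Dom C g \<Longrightarrow>
   Comp C g f \<in> Arr C \<and> Dom C (Comp C g f) = Dom C f \<and> Cod C (Comp C g f) = Cod C g"
  unfolding category_def Hom_def by auto

lemma category_comp_assoc:
  "category C \<Longrightarrow> f \<in> Arr C \<Longrightarrow> g \<in> Arr C \<Longrightarrow> h \<in> Arr C \<Longrightarrow>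
   Cod C f = Dom C g \<Longrightarrow> Cod C g = Dom C h \<Longrightarrow>
   Comp C h (Comp C g f) = Comp C (Comp C h g) f"
  unfolding category_def by blast

lemma category_comp_Id_left: "category C \<Longrightarrow> f \<in> Arr C \<Longrightarrow> Comp C (Id C (Cod C f)) f = f"
  unfolding category_def by blast

lemma category_comp_Id_right: "category C \<Longrightarrow> f \<in> Arr C \<Longrightarrow> Comp C f (Id C (Dom C f)) = f"
  unfolding category_def by blast

lemma cancellative_mono:
  "cancellative C \<Longrightarrow> h \<in> Arr C \<Longrightarrow> f \<in> Arr C \<Longrightarrow> g \<in> Arr C \<Longrightarrow>
   Cod C f = Dom C h \<Longrightarrow> Cod C g = Dom C h \<Longrightarrow> Dom C f = Dom C g \<Longrightarrow>
   Comp C h f = Comp C h g \<Longrightarrow> f = g"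
  unfolding cancellative_def by blast

lemma cancellative_epi:
  "cancellative C \<Longrightarrow> h \<in> Arr C \<Longrightarrow> f \<in> Arr C \<Longrightarrow> g \<in> Arr C \<Longrightarrow>
   Dom C f = Cod C h \<Longrightarrow> Dom C g = Cod C h \<Longrightarrow> Cod C f = Cod C g \<Longrightarrow>
   Comp C f h = Comp C g h \<Longrightarrow> f = g"
  unfolding cancellative_def by blast

lemma eq_Id_if_comp_eq_self_left:
  assumes C: "category C" and K: "cancellative C"
    and h: "h \<in> Arr C" and f: "f \<in> Arr C" and "Dom C h = Cod C f" and "Cod C h = Cod C f"
    and hf: "Comp C h f = f"
  shows "h = Id C (Cod C f)"
proof (rule cancellative_epi[OF K f h])
  show "Comp C h f = Comp C (Id C (Cod C f)) f"
    unfolding hf category_comp_Id_left[OF C f] ..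
qed (use assms category_Id[OF C] category_Cod_in_Obj[OF C] in auto)

lemma eq_Id_if_comp_eq_self_right:
  assumes C: "category C" and K: "cancellative C"
    and h: "h \<in> Arr C" and g: "g \<in> Arr C" and "Dom C h = Dom C g" and "Cod C h = Dom C g"
    and gh: "Comp C g h = g"
  shows "h = Id C (Dom C g)"
proof (rule cancellative_mono[OF K g h])
  show "Comp C g h = Comp C g (Id C (Dom C g))"
    unfolding gh category_comp_Id_right[OF C g] ..
qed (use assms category_Id[OF C] category_Dom_in_Obj[OF C] in auto)

lemma retraction_if_comp_eq_Id:
  assumes "category C" and "r \<in> Arr C" and "s \<in> Arr C" and "Cod C s = Dom C r"
    and "Comp C r s = Id C (Cod C r)"
  shows "retraction C r"
  using assms category_Cod_in_Obj[OF assms(1,2)] unfolding retraction_def by blast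

lemma identity_eq_Id:
  assumes "category C" and "is_identity C r"
  shows "r = Id C (Dom C r)" and "Cod C r = Dom C r"
proof -
  obtain a where "a \<in> Obj C" and "r = Id C a"
    using assms(2) unfolding is_identity_def by blast
  then show "r = Id C (Dom C r)" and "Cod C r = Dom C r"
    using category_Id[OF assms(1)] by auto
qed

lemma mem_CommaObj_iff:
  "(\<beta>, (f, g)) \<in> CommaObj C \<alpha> \<longleftrightarrow> \<beta> \<in> Arr C
     \<and> f \<in> Arr C \<and> Dom C f = Dom C \<alpha> \<and> Cod C f = Dom C \<beta>
     \<and> g \<in> Arr C \<and> Dom C g = Cod C \<beta> \<and> Cod C g = Cod C \<alpha>
     \<and> Comp C g (Comp C \<beta> f) = \<alpha>"
  unfolding CommaObj_def FHom_def Hom_def by auto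

lemma mem_CommaHom_iff:
  "(p, q) \<in> CommaHom C (\<beta>, (f, g)) (\<beta>', (f', g')) \<longleftrightarrow>
       p \<in> Arr C \<and> Dom C p = Dom C \<beta>' \<and> Cod C p = Dom C \<beta>
     \<and> q \<in> Arr C \<and> Dom C q = Cod C \<beta> \<and> Cod C q = Cod C \<beta>'
     \<and> Comp C q (Comp C \<beta> p) = \<beta>' \<and> Comp C p f' = f \<and> Comp C g' q = g"
  unfolding CommaHom_def FHom_def FComp_def Hom_def by auto

lemma CommaHom_unique:
  assumes K: "cancellative C" and "Y \<in> CommaObj C \<alpha>"
    and "u \<in> CommaHom C X Y" and "v \<in> CommaHom C X Y"
  shows "u = v"
proof -
  obtain \<beta> f g \<beta>' f' g' p q p' q'
    where eqs: "X = (\<beta>, (f, g))" "Y = (\<beta>', (f', g'))" "u = (p, q)" "v = (p', q')"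
    by (cases X rule: prod_cases3, cases Y rule: prod_cases3, cases u, cases v) blast
  note facts = assms[unfolded eqs mem_CommaObj_iff mem_CommaHom_iff]
  have "p = p'"
    by (rule cancellative_epi[OF K, of f']) (use facts in auto)
  moreover have "q = q'"
    by (rule cancellative_mono[OF K, of g']) (use facts in auto)
  ultimately show ?thesis
    using eqs by simp
qed

lemma CommaHom_antisym:
  assumes C: "category C" and K: "cancellative C"
    and R: "\<forall>r. retraction C r \<longrightarrow> is_identity C r"
    and "X \<in> CommaObj C \<alpha>" and "Y \<in> CommaObj C \<alpha>"
    and "u \<in> CommaHom C X Y" and "v \<in> CommaHom C Y X"
  shows "X = Y"
proof -
  obtain \<beta> f g \<beta>' f' g' p q p' q'
    where eqs: "X = (\<beta>, (f, g))" "Y = (\<beta>', (f', g'))" "u = (p, q)" "v = (p', q')"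
    by (cases X rule: prod_cases3, cases Y rule: prod_cases3, cases u, cases v) blast
  note facts = assms(4-7)[unfolded eqs mem_CommaObj_iff mem_CommaHom_iff]
  have "Comp C (Comp C p p') f = f"
    using facts category_comp_assoc[OF C, of f p' p] by simp
  then have "Comp C p p' = Id C (Cod C p)"
    using facts category_comp[OF C, of p' p] eq_Id_if_comp_eq_self_left[OF C K, of "Comp C p p'" f]
    by simp
  then have "is_identity C p"
    using facts R retraction_if_comp_eq_Id[OF C, of p p'] by simp
  then have p: "p = Id C (Dom C \<beta>)" and "Dom C \<beta>' = Dom C \<beta>"
    using identity_eq_Id[OF C, of p] facts by auto
  have "Comp C g' (Comp C q q') = g'"
    using facts category_comp_assoc[OF C, of q' q g'] by simp
  then have "Comp C q q' = Id C (Cod C q)"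
    using facts category_comp[OF C, of q' q] eq_Id_if_comp_eq_self_right[OF C K, of "Comp C q q'" g']
    by simp
  then have "is_identity C q"
    using facts R retraction_if_comp_eq_Id[OF C, of q q'] by simp
  then have q: "q = Id C (Cod C \<beta>)" and "Cod C \<beta>' = Cod C \<beta>"
    using identity_eq_Id[OF C, of q] facts by auto
  have "\<beta>' = Comp C (Id C (Cod C \<beta>)) (Comp C \<beta> (Id C (Dom C \<beta>)))"
    using facts p q by simp
  also have "\<dots> = \<beta>"
    using facts category_comp_Id_left[OF C, of \<beta>] category_comp_Id_right[OF C, of \<beta>] by simp
  finally have "\<beta>' = \<beta>" .
  moreover have "f = f'"
    using facts p \<open>Dom C \<beta>' = Dom C \<beta>\<close> category_comp_Id_left[OF C, of f'] by simp
  moreover have "g = g'"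
    using facts q \<open>Cod C \<beta>' = Cod C \<beta>\<close> category_comp_Id_right[OF C, of g'] by simp
  ultimately show ?thesis
    using eqs by simp
qed

theorem mainTheorem14:
  fixes C :: "('o, 'm) cat" and \<alpha> :: 'm
  assumes "category C"
    and "cancellative C"
    and "\<forall>r. retraction C r \<longrightarrow> is_identity C r"
    and "\<alpha> \<in> Arr C"
  shows "is_poset (CommaObj C \<alpha>) (CommaHom C)"
  unfolding is_poset_def
  using CommaHom_unique[OF assms(2)] CommaHom_antisym[OF assms(1-3)] by blast

end
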